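(* Let $r\ge 3$ and let $T=T_0\oplus T_1$ be a finite-dimensional nilpotent module over the preprojective algebra $\Lambda$ of the graph with two vertices $0,1$ joined by $r$ edges, with graded socle filtration $0=U_0\subset U_1\subset U_2\subset\cdots$. Suppose $1\le j<k$ with $k-j$ even, and suppose the subquotient $U_k/U_j$ has a submodule of dimension vector $a\,\alpha_j+b\,\alpha_{j+1}$. Then $U_{k-1}/U_{j-1}$ has a submodule of dimension vector $b\,\alpha_{j+1}+c\,\alpha_j$ for some integer $c\le rb-a$. If moreover $j\ge 2$, then $c\ge b/r$.
   Context: Setup: $r\ge3$, $I=\{0,1\}$, Cartan matrix $\begin{pmatrix}2&-r\\-r&2\end{pmatrix}$, simple roots $\alpha_0,\alpha_1$. The graph has vertices $0,1$ and $r$ edges between them; the double quiver has arrows $0\to1$ and $1\to0$, one of each per edge, $\bar a$ denoting the reverse of $a$. Fix an orientation $\Omega$ (one arrow per edge), $\varepsilon(a)=\pm1$ according to $a\in\Omega$ or not. $\Lambda$ is the path algebra modulo the ideal generated by $\sum_a\varepsilon(a)\bar a a$. A $\Lambda$-module $T=T_0\oplus T_1$ is given by linear maps $x_a:T_{s(a)}\to T_{t(a)}$ for each arrow; nilpotent means all long enough paths act by $0$. The dimension vector of a graded module $S$ is $\dim S_0\,\alpha_0+\dim S_1\,\alpha_1$. For an index $k\ge1$, write $\alpha_k=\alpha_1$ if $k$ is odd and $\alpha_k=\alpha_0$ if $k$ is even, and similarly the vertex of $k$ is $1$ for $k$ odd, $0$ for $k$ even. The graded socle filtration is defined by $U_0=0$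 and, for $k\ge1$ with vertex $i$, $U_k=U_{k-1}+\{v\in T_i: x_a(v)\in U_{k-1}\text{ for all arrows }a\text{ with }s(a)=i\}$ (so $U_1=\mathrm{Soc}(T)\cap T_1$). Each $U_k$ is a submodule. *)

theory Defs
  imports Complex_Main
begin

text \<open>
A graded module T = T0 (+) T1 over the preprojective algebra of the
graph with vertices 0,1 and r edges (indexed 0..<r) is given by two vector spaces
over a field 'k (carrier types 'a = T0 with scaling sa, 'b = T1 with scaling sb),
and for each edge e < r the arrow maps  A e : T0 -> T1  (arrow 0->1) and
B e : T1 -> T0  (arrow 1->0, the reverse of A e).  The orientation is
om :: nat => bool, where om e means the arrow 0->1 of edge e lies in Omega.
\<close>

definition eps0 :: "(nat \<Rightarrow> bool) \<Rightarrow> nat \<Rightarrow> 'k::field" where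
  "eps0 om e = (if om e then 1 else -1)"

definition eps1 :: "(nat \<Rightarrow> bool) \<Rightarrow> nat \<Rightarrow> 'k::field" where
  "eps1 om e = (if om e then -1 else 1)"

text \<open>Composite of a sequence of 2-cycles 0->1->0 (resp. 1->0->1);
 a pair (e,f) means: first arrow of edge e, then the reverse arrow of edge f.\<close>
fun loop0 :: "(nat \<Rightarrow> 'a \<Rightarrow> 'b) \<Rightarrow> (nat \<Rightarrow> 'b \<Rightarrow> 'a) \<Rightarrow> (nat \<times> nat) list \<Rightarrow> 'a \<Rightarrow> 'a" where
  "loop0 A B [] = id"
| "loop0 A B ((e,f) # ps) = loop0 A B ps \<circ> B f \<circ> A e"

fun loop1 :: "(nat \<Rightarrow> 'a \<Rightarrow> 'b) \<Rightarrow> (nat \<Rightarrow> 'b \<Rightarrow> 'a) \<Rightarrow> (nat \<times> nat) list \<Rightarrow> 'b \<Rightarrow> 'b" where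
  "loop1 A B [] = id"
| "loop1 A B ((e,f) # ps) = loop1 A B ps \<circ> A f \<circ> B e"

definition edges_in :: "nat \<Rightarrow> (nat \<times> nat) list \<Rightarrow> bool" where
  "edges_in r ps = (\<forall>(e,f)\<in>set ps. e < r \<and> f < r)"

definition preproj_module ::
  "('k::field \<Rightarrow> 'a::ab_group_add \<Rightarrow> 'a) \<Rightarrow> ('k \<Rightarrow> 'b::ab_group_add \<Rightarrow> 'b) \<Rightarrow> nat \<Rightarrow> (nat \<Rightarrow> bool)
    \<Rightarrow> (nat \<Rightarrow> 'a \<Rightarrow> 'b) \<Rightarrow> (nat \<Rightarrow> 'b \<Rightarrow> 'a) \<Rightarrow> bool" where
  "preproj_module sa sb r om A B \<longleftrightarrow>
     vector_space sa \<and> vector_space sb \<and>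
     (\<forall>e<r. Vector_Spaces.linear sa sb (A e) \<and> Vector_Spaces.linear sb sa (B e)) \<and>
     (\<forall>v. (\<Sum>e<r. sa (eps0 om e) (B e (A e v))) = 0) \<and>
     (\<forall>w. (\<Sum>e<r. sb (eps1 om e) (A e (B e w))) = 0)"

definition fin_dim :: "('k::field \<Rightarrow> 'a::ab_group_add \<Rightarrow> 'a) \<Rightarrow> bool" where
  "fin_dim s \<longleftrightarrow> (\<exists>S. finite S \<and> module.span s S = UNIV)"

text \<open>Nilpotent: every path of length at least 2N (even: a product of N or more
 2-cycles; odd: such a product followed by one more arrow) acts by zero.\<close>
definition nilpotent_mod :: "nat \<Rightarrow> (nat \<Rightarrow> 'a::zero \<Rightarrow> 'b::zero) \<Rightarrow> (nat \<Rightarrow> 'b \<Rightarrow> 'a) \<Rightarrow> bool" where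
  "nilpotent_mod r A B \<longleftrightarrow> (\<exists>N. \<forall>ps. edges_in r ps \<and> length ps \<ge> N \<longrightarrow>
      (\<forall>v. loop0 A B ps v = 0) \<and> (\<forall>w. loop1 A B ps w = 0) \<and>
      (\<forall>e<r. (\<forall>v. A e (loop0 A B ps v) = 0) \<and> (\<forall>w. B e (loop1 A B ps w) = 0)))"

text \<open>(Graded) submodule = pair of subspaces stable under all arrows.
 Over Lambda (containing the vertex idempotents) every submodule is graded.\<close>
definition is_submod ::
  "('k::field \<Rightarrow> 'a::ab_group_add \<Rightarrow> 'a) \<Rightarrow> ('k \<Rightarrow> 'b::ab_group_add \<Rightarrow> 'b) \<Rightarrow> nat
    \<Rightarrow> (nat \<Rightarrow> 'a \<Rightarrow> 'b) \<Rightarrow> (nat \<Rightarrow> 'b \<Rightarrow> 'a) \<Rightarrow> 'a set \<times> 'b set \<Rightarrow> bool" where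
  "is_submod sa sb r A B W \<longleftrightarrow>
     module.subspace sa (fst W) \<and> module.subspace sb (snd W) \<and>
     (\<forall>e<r. A e ` fst W \<subseteq> snd W \<and> B e ` snd W \<subseteq> fst W)"

definition submod_le :: "'a set \<times> 'b set \<Rightarrow> 'a set \<times> 'b set \<Rightarrow> bool" where
  "submod_le V W \<longleftrightarrow> fst V \<subseteq> fst W \<and> snd V \<subseteq> snd W"

definition set_plus :: "'a::plus set \<Rightarrow> 'a set \<Rightarrow> 'a set" where
  "set_plus P Q = {p + q | p q. p \<in> P \<and> q \<in> Q}"

definition vtx :: "nat \<Rightarrow> nat" where
  "vtx k = (if odd k then 1 else 0)"

fun socfilt :: "nat \<Rightarrow> (nat \<Rightarrow> 'a::ab_group_add \<Rightarrow> 'b::ab_group_add) \<Rightarrow> (nat \<Rightarrow> 'b \<Rightarrow> 'a)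
    \<Rightarrow> nat \<Rightarrow> 'a set \<times> 'b set" where
  "socfilt r A B 0 = ({0}, {0})"
| "socfilt r A B (Suc k) =
     (let P = fst (socfilt r A B k); Q = snd (socfilt r A B k) in
      if vtx (Suc k) = 1
      then (P, set_plus Q {w. \<forall>e<r. B e w \<in> P})
      else (set_plus P {v. \<forall>e<r. A e v \<in> Q}, Q))"

definition dim_at ::
  "('k::field \<Rightarrow> 'a::ab_group_add \<Rightarrow> 'a) \<Rightarrow> ('k \<Rightarrow> 'b::ab_group_add \<Rightarrow> 'b) \<Rightarrow> nat \<Rightarrow> 'a set \<times> 'b set \<Rightarrow> nat" where
  "dim_at sa sb i W = (if i = 0 then vector_space.dim sa (fst W) else vector_space.dim sb (snd W))"

text \<open>The subquotient U_k/U_j has a submodule of dimension vector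
 d0 alpha_0 + d1 alpha_1 iff there is a submodule W with U_j <= W <= U_k and
 dim W_i = dim (U_j)_i + d_i (correspondence theorem).\<close>
definition subquot_has_submod ::
  "('k::field \<Rightarrow> 'a::ab_group_add \<Rightarrow> 'a) \<Rightarrow> ('k \<Rightarrow> 'b::ab_group_add \<Rightarrow> 'b) \<Rightarrow> nat
    \<Rightarrow> (nat \<Rightarrow> 'a \<Rightarrow> 'b) \<Rightarrow> (nat \<Rightarrow> 'b \<Rightarrow> 'a) \<Rightarrow> 'a set \<times> 'b set \<Rightarrow> 'a set \<times> 'b set
    \<Rightarrow> (nat \<Rightarrow> nat) \<Rightarrow> bool" where
  "subquot_has_submod sa sb r A B L H d \<longleftrightarrow>
     (\<exists>W. is_submod sa sb r A B W \<and> submod_le L W \<and> submod_le W H \<and>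
          dim_at sa sb 0 W = dim_at sa sb 0 L + d 0 \<and>
          dim_at sa sb 1 W = dim_at sa sb 1 L + d 1)"

text \<open>Dimension vector a alpha_j + b alpha_{j+1}, as a function of the vertex.\<close>
definition dimvec :: "nat \<Rightarrow> nat \<Rightarrow> nat \<Rightarrow> nat \<Rightarrow> nat" where
  "dimvec j a b i = (if i = vtx j then a else b)"

end

theory Submission
  imports Defs
begin

text \<open>
Let x be the vertex of j, y the other vertex, f_e : T_x -> T_y and g_e : T_y -> T_x the two
arrows of edge e, and W the given submodule, U_j <= W <= U_k. Since k - j is even, U_j and U_k
differ from U_{j-1} and U_{k-1} only at x. Keeping W_y and replacing W_x by
Z = U_{j-1,x} + sum_e g_e(W_y) gives a submodule between U_{j-1} and U_{k-1}; let
c = dim Z/U_{j-1,x}.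

By the definition of U_j, v |-> (f_e v)_e embeds W_x/U_{j,x} into r copies of W_y/U_{j,y}, and
by the preprojective relation at x, composing with the surjection (w_e)_e |-> sum_e eps_e g_e w_e
onto Z/U_{j-1,x} gives zero; hence a <= r b - c. For j >= 2 the definition of U_{j-1} makes
w |-> (g_e w)_e embed W_y/U_{j-1,y} into r copies of Z/U_{j-1,x}, so b <= r c. The direct sums
are never formed: both counts are done one edge at a time.
\<close>

section \<open>Linear algebra\<close>

lemma subspace_complement_exists:
  fixes s :: "'k::field \<Rightarrow> 'x::ab_group_add \<Rightarrow> 'x"
  assumes "finite_dimensional_vector_space s Bs"
    and N: "module.subspace s N" and S: "module.subspace s S" and "N \<subseteq> S"
  obtains D where "module.subspace s D" "set_plus N D = S" "N \<inter> D = {0}"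
proof -
  interpret v: finite_dimensional_vector_space s Bs by fact
  obtain B where B: "B \<subseteq> N" "v.independent B" "N \<subseteq> v.span B" "card B = v.dim N"
    using v.basis_exists by blast
  obtain C where C: "B \<subseteq> C" "C \<subseteq> S" "v.independent C" "S \<subseteq> v.span C"
    using v.maximal_independent_subset_extend[of B S] B(1,2) \<open>N \<subseteq> S\<close> by blast
  define D where "D = v.span (C - B)"
  have spanB: "v.span B = N" by (rule v.span_subspace[OF B(1,3) N])
  have spanC: "v.span C = S" by (rule v.span_subspace[OF C(2,4) S])
  have sum: "set_plus N D = S"
    using v.span_Un[of B "C - B"] C(1) spanB spanC
    unfolding D_def set_plus_def by (simp add: Un_absorb1)
  have indD: "v.independent (C - B)" using C(3) v.independent_mono by blast
  have finC: "finite C" using C(3) v.finiteI_independent by blast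
  have "card C = card B + card (C - B)"
    using card_Diff_subset[OF finite_subset[OF C(1) finC] C(1)] card_mono[OF finC C(1)] by simp
  moreover have "v.dim S = card C" using v.basis_card_eq_dim C(2-4) by simp
  moreover have "v.dim D = card (C - B)" using indD v.dim_span_eq_card_independent D_def by simp
  ultimately have "v.dim S = v.dim N + v.dim D" using B(4) by simp
  then have "v.dim (N \<inter> D) = 0"
    using v.dim_sums_Int[OF N, of D] sum unfolding D_def set_plus_def by simp
  then have "N \<inter> D = {0}"
    using v.subspace_0[OF N] v.span_zero unfolding D_def by auto
  then show ?thesis using that sum unfolding D_def by blast
qed

lemma rank_nullity_subspace:
  fixes s1 :: "'k::field \<Rightarrow> 'x::ab_group_add \<Rightarrow> 'x" and s2 :: "'k \<Rightarrow> 'y::ab_group_add \<Rightarrow> 'y"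
  assumes fd1: "finite_dimensional_vector_space s1 B1" and fd2: "finite_dimensional_vector_space s2 B2"
    and lin: "Vector_Spaces.linear s1 s2 f" and S: "module.subspace s1 S"
  shows "vector_space.dim s1 S = vector_space.dim s2 (f ` S) + vector_space.dim s1 {x\<in>S. f x = 0}"
proof -
  interpret v1: finite_dimensional_vector_space s1 B1 by fact
  interpret v2: finite_dimensional_vector_space s2 B2 by fact
  interpret p: finite_dimensional_vector_space_pair s1 B1 s2 B2 by unfold_locales
  interpret lf: Vector_Spaces.linear s1 s2 f by fact
  let ?N = "{x\<in>S. f x = 0}"
  have N: "v1.subspace ?N"
    using v1.subspace_inter[OF S lf.subspace_kernel] by (simp add: Collect_conj_eq Int_commute)
  obtain D where D: "v1.subspace D" "set_plus ?N D = S" "?N \<inter> D = {0}"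
    using subspace_complement_exists[OF fd1 N S] by blast
  have DS: "D \<subseteq> S" using D(2) v1.subspace_0[OF N] unfolding set_plus_def by force
  have "inj_on f D"
    unfolding lf.inj_on_iff_eq_0[OF D(1)] using D(3) DS by blast
  moreover have "v1.span D = D" using D(1) by simp
  ultimately have dimD: "v2.dim (f ` D) = v1.dim D"
    by (intro p.dim_image_eq[OF lin]) (simp only:)
  have "f ` S = f ` D"
  proof
    show "f ` S \<subseteq> f ` D"
    proof
      fix z assume "z \<in> f ` S"
      then obtain x where "x \<in> set_plus ?N D" "z = f x"
        unfolding D(2) by blast
      then obtain n d where "n \<in> ?N" "d \<in> D" "z = f (n + d)"
        unfolding set_plus_def by blast
      then show "z \<in> f ` D" by (simp add: lf.add)
    qed
  qed (use DS in blast)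
  moreover have "v1.dim S = v1.dim ?N + v1.dim D"
    using v1.dim_sums_Int[OF N D(1)] D(2,3) unfolding set_plus_def by simp
  ultimately show ?thesis using dimD by simp
qed

lemma dim_plus_dim_preimage:
  fixes s1 :: "'k::field \<Rightarrow> 'x::ab_group_add \<Rightarrow> 'x" and s2 :: "'k \<Rightarrow> 'y::ab_group_add \<Rightarrow> 'y"
  assumes fd1: "finite_dimensional_vector_space s1 B1" and fd2: "finite_dimensional_vector_space s2 B2"
    and lin: "Vector_Spaces.linear s1 s2 f"
    and S: "module.subspace s1 S" and R: "module.subspace s2 R"
  shows "vector_space.dim s1 S + vector_space.dim s2 R =
         vector_space.dim s2 (set_plus (f ` S) R) + vector_space.dim s1 {x\<in>S. f x \<in> R}"
proof -
  interpret v1: finite_dimensional_vector_space s1 B1 by fact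
  interpret v2: finite_dimensional_vector_space s2 B2 by fact
  interpret lf: Vector_Spaces.linear s1 s2 f by fact
  let ?K = "{x\<in>S. f x \<in> R}"
  have K: "v1.subspace ?K"
    using v1.subspace_inter[OF S lf.subspace_linear_preimage[OF R]]
    by (simp add: Collect_conj_eq Int_commute)
  have "{x\<in>?K. f x = 0} = {x\<in>S. f x = 0}" using v2.subspace_0[OF R] by auto
  then have "v1.dim S - v1.dim ?K = v2.dim (f ` S) - v2.dim (f ` ?K)"
    using rank_nullity_subspace[OF fd1 fd2 lin S] rank_nullity_subspace[OF fd1 fd2 lin K] by simp
  moreover have "f ` ?K = f ` S \<inter> R" by auto
  moreover have "v2.dim (set_plus (f ` S) R) + v2.dim (f ` S \<inter> R) = v2.dim (f ` S) + v2.dim R"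
    unfolding set_plus_def by (rule v2.dim_sums_Int[OF lf.subspace_image[OF S] R])
  moreover have "v1.dim ?K \<le> v1.dim S" "v2.dim (f ` ?K) \<le> v2.dim (f ` S)"
    by (auto intro: v1.dim_subset v2.dim_subset)
  ultimately show ?thesis by simp
qed

lemma dim_add_le_dim_preimage:
  fixes s1 :: "'k::field \<Rightarrow> 'x::ab_group_add \<Rightarrow> 'x" and s2 :: "'k \<Rightarrow> 'y::ab_group_add \<Rightarrow> 'y"
  assumes fd1: "finite_dimensional_vector_space s1 B1" and fd2: "finite_dimensional_vector_space s2 B2"
    and lin: "Vector_Spaces.linear s1 s2 f"
    and S: "module.subspace s1 S" and R: "module.subspace s2 R" and "set_plus (f ` S) R \<subseteq> Q"
  shows "vector_space.dim s1 S + vector_space.dim s2 R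
           \<le> vector_space.dim s2 Q + vector_space.dim s1 {x\<in>S. f x \<in> R}"
proof -
  interpret v2: finite_dimensional_vector_space s2 B2 by fact
  show ?thesis
    using dim_plus_dim_preimage[OF fd1 fd2 lin S R] v2.dim_subset[OF \<open>set_plus (f ` S) R \<subseteq> Q\<close>]
    by simp
qed

lemma span_Un_linear_image:
  fixes s1 :: "'k::field \<Rightarrow> 'x::ab_group_add \<Rightarrow> 'x" and s2 :: "'k \<Rightarrow> 'y::ab_group_add \<Rightarrow> 'y"
  assumes "vector_space s1" and "vector_space s2"
    and lin: "Vector_Spaces.linear s1 s2 f" and S: "module.subspace s1 S"
  shows "module.span s2 (f ` S \<union> T) = set_plus (f ` S) (module.span s2 T)"
proof -
  interpret v1: vector_space s1 by fact
  interpret v2: vector_space s2 by fact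
  interpret p: vector_space_pair s1 s2 by unfold_locales
  have span_image: "v2.span (f ` S) = f ` S"
    using p.linear_subspace_image[OF lin S] by (simp only: v2.span_eq_iff)
  show ?thesis unfolding v2.span_Un span_image set_plus_def by (rule refl)
qed

lemma subspace_joint_preimage:
  fixes s1 :: "'k::field \<Rightarrow> 'x::ab_group_add \<Rightarrow> 'x" and s2 :: "'k \<Rightarrow> 'y::ab_group_add \<Rightarrow> 'y"
  assumes "vector_space s1" and "vector_space s2"
    and lin: "\<forall>e<n. Vector_Spaces.linear s1 s2 (h e)"
    and S: "module.subspace s1 S" and R: "module.subspace s2 R"
  shows "module.subspace s1 {x\<in>S. \<forall>e<n. h e x \<in> R}"
proof -
  interpret v1: vector_space s1 by fact
  interpret v2: vector_space s2 by fact
  interpret vp: vector_space_pair s1 s2 by unfold_locales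
  have "{x\<in>S. \<forall>e<n. h e x \<in> R} = S \<inter> \<Inter>((\<lambda>e. {x. h e x \<in> R}) ` {..<n})" by auto
  moreover have "v1.subspace {x. h e x \<in> R}" if "e < n" for e
    using vp.linear_subspace_linear_preimage[OF _ R] lin that by blast
  ultimately show ?thesis using v1.subspace_inter[OF S] v1.subspace_Inter by auto
qed

lemma telescoping_le:
  fixes u :: "nat \<Rightarrow> nat"
  assumes "\<And>m. m < n \<Longrightarrow> u m + d \<le> u (Suc m) + D"
  shows "u 0 + n * d \<le> u n + n * D"
  using assms
proof (induction n)
  case (Suc n)
  then have "u 0 + n * d \<le> u n + n * D" "u n + d \<le> u (Suc n) + D" by simp_all
  then show ?case by simp
qed simp

lemma codim_joint_preimage_le:
  fixes s1 :: "'k::field \<Rightarrow> 'x::ab_group_add \<Rightarrow> 'x" and s2 :: "'k \<Rightarrow> 'y::ab_group_add \<Rightarrow> 'y"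
  assumes fd1: "finite_dimensional_vector_space s1 B1" and fd2: "finite_dimensional_vector_space s2 B2"
    and lin: "\<forall>e<n. Vector_Spaces.linear s1 s2 (h e)"
    and S: "module.subspace s1 S" and R: "module.subspace s2 R" and Q: "module.subspace s2 Q"
    and "R \<subseteq> Q" and hS: "\<forall>e<n. h e ` S \<subseteq> Q"
  shows "vector_space.dim s1 S + n * vector_space.dim s2 R
           \<le> vector_space.dim s1 {x\<in>S. \<forall>e<n. h e x \<in> R} + n * vector_space.dim s2 Q"
proof -
  interpret v1: finite_dimensional_vector_space s1 B1 by fact
  interpret v2: finite_dimensional_vector_space s2 B2 by fact
  define M where "M m = {x\<in>S. \<forall>e<m. h e x \<in> R}" for m
  have "v1.dim (M m) + v2.dim R \<le> v1.dim (M (Suc m)) + v2.dim Q" if m: "m < n" for m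
  proof -
    have M: "v1.subspace (M m)"
      unfolding M_def using subspace_joint_preimage[of s1 s2 m h] lin m S R
      by (simp add: v1.vector_space_axioms v2.vector_space_axioms)
    have "set_plus (h m ` M m) R \<subseteq> Q"
      using hS m \<open>R \<subseteq> Q\<close> v2.subspace_add[OF Q] unfolding M_def set_plus_def by blast
    then have "v1.dim (M m) + v2.dim R \<le> v2.dim Q + v1.dim {x\<in>M m. h m x \<in> R}"
      using dim_add_le_dim_preimage[OF fd1 fd2 _ M R] lin m by blast
    moreover have "{x\<in>M m. h m x \<in> R} = M (Suc m)" unfolding M_def using less_Suc_eq by auto
    ultimately show ?thesis by simp
  qed
  then show ?thesis using telescoping_le[of n "\<lambda>m. v1.dim (M m)"] by (simp add: M_def)
qed

lemma mem_subspace_of_linear_relation: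
  fixes s :: "'k::field \<Rightarrow> 'x::ab_group_add \<Rightarrow> 'x" and n m :: nat
  assumes "vector_space s" and V: "module.subspace s V"
    and rel: "(\<Sum>e<n. s (c e) (u e)) = 0" and "m < n" and "c m \<noteq> 0"
    and others: "\<forall>e<n. e \<noteq> m \<longrightarrow> u e \<in> V"
  shows "u m \<in> V"
proof -
  interpret v: vector_space s by fact
  have "(\<Sum>e<n. s (c e) (u e)) = s (c m) (u m) + (\<Sum>e\<in>{..<n} - {m}. s (c e) (u e))"
    by (rule sum.remove) (use \<open>m < n\<close> in auto)
  then have "s (c m) (u m) = - (\<Sum>e\<in>{..<n} - {m}. s (c e) (u e))"
    using rel by (simp add: eq_neg_iff_add_eq_0)
  also have "\<dots> \<in> V"
    using others by (intro v.subspace_neg[OF V] v.subspace_sum[OF V] v.subspace_scale[OF V]) auto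
  finally have "s (inverse (c m)) (s (c m) (u m)) \<in> V" by (rule v.subspace_scale[OF V])
  then show ?thesis using \<open>c m \<noteq> 0\<close> by simp
qed

lemma fin_dimE:
  fixes s :: "'k::field \<Rightarrow> 'x::ab_group_add \<Rightarrow> 'x"
  assumes "vector_space s" and "fin_dim s"
  obtains Bs where "finite_dimensional_vector_space s Bs"
proof -
  interpret v: vector_space s by fact
  obtain S where S: "finite S" "v.span S = UNIV" using assms(2) unfolding fin_dim_def by blast
  obtain B where B: "B \<subseteq> UNIV" "v.independent B" "UNIV \<subseteq> v.span B" "card B = v.dim UNIV"
    using v.basis_exists by blast
  have "finite B" using v.independent_span_bound[OF S(1) B(2)] S(2) by auto
  then show ?thesis
    using that B assms(1)
    unfolding finite_dimensional_vector_space_def finite_dimensional_vector_space_axioms_def by auto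
qed

section \<open>Exchanging the two vertices\<close>

lemma preproj_module_swap:
  assumes "preproj_module sa sb r om A B"
  shows "preproj_module sb sa r (\<lambda>e. \<not> om e) B A"
proof -
  have eps: "eps0 (\<lambda>e. \<not> om e) = eps1 om" "eps1 (\<lambda>e. \<not> om e) = eps0 om"
    by (simp_all add: fun_eq_iff eps0_def eps1_def)
  show ?thesis using assms unfolding preproj_module_def eps by auto
qed

lemma is_submod_swap: "is_submod sb sa r B A (prod.swap W) \<longleftrightarrow> is_submod sa sb r A B W"
  unfolding is_submod_def fst_swap snd_swap by blast

lemma submod_le_swap: "submod_le (prod.swap V) (prod.swap W) \<longleftrightarrow> submod_le V W"
  unfolding submod_le_def by auto

lemma subquot_has_submod_swap:
  fixes L H :: "'a::ab_group_add set \<times> 'b::ab_group_add set"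
  shows "subquot_has_submod sb sa r B A (prod.swap L) (prod.swap H) (dimvec (Suc j) a b)
     \<longleftrightarrow> subquot_has_submod sa sb r A B L H (dimvec j a b)"
proof -
  have ex_swap: "(\<exists>W. P W) \<longleftrightarrow> (\<exists>W. P (prod.swap W))" for P :: "'b set \<times> 'a set \<Rightarrow> bool"
    by (metis swap_swap)
  have "dimvec (Suc j) a b 0 = dimvec j a b 1" "dimvec (Suc j) a b 1 = dimvec j a b 0"
    by (simp_all add: dimvec_def vtx_def)
  then show ?thesis
    unfolding subquot_has_submod_def
    by (subst ex_swap) (auto simp: is_submod_swap submod_le_swap dim_at_def)
qed

lemma dimvec_even: "even j \<Longrightarrow> dimvec j = dimvec 0"
  by (simp add: fun_eq_iff dimvec_def vtx_def)

section \<open>The socle filtration\<close>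

definition socle_ext :: "nat \<Rightarrow> (nat \<Rightarrow> 'x::ab_group_add \<Rightarrow> 'y::ab_group_add)
    \<Rightarrow> 'x set \<times> 'y set \<Rightarrow> 'x set \<times> 'y set" where
  "socle_ext r f U = (set_plus (fst U) {v. \<forall>e<r. f e v \<in> snd U}, snd U)"

lemma socfilt_Suc_even:
  "even (Suc n) \<Longrightarrow> socfilt r A B (Suc n) = socle_ext r A (socfilt r A B n)"
  by (simp add: vtx_def Let_def socle_ext_def)

lemma socfilt_Suc_odd:
  "odd (Suc n) \<Longrightarrow> socfilt r A B (Suc n) = prod.swap (socle_ext r B (prod.swap (socfilt r A B n)))"
  by (simp add: vtx_def Let_def socle_ext_def)

lemma subset_set_plus_left: "(0::'a::monoid_add) \<in> Q \<Longrightarrow> P \<subseteq> set_plus P Q"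
  unfolding set_plus_def by force

lemma subset_set_plus_right: "(0::'a::monoid_add) \<in> P \<Longrightarrow> Q \<subseteq> set_plus P Q"
  unfolding set_plus_def by force

lemma zero_mem_submod:
  assumes "preproj_module sx sy r om f g" and "is_submod sx sy r f g U"
  shows "0 \<in> fst U" and "0 \<in> snd U"
  using assms module.subspace_0 module_iff_vector_space
  unfolding preproj_module_def is_submod_def by metis+

lemma is_submod_socle_ext:
  assumes P: "preproj_module sx sy r om f g" and U: "is_submod sx sy r f g U"
  shows "is_submod sx sy r f g (socle_ext r f U)"
proof -
  interpret vx: vector_space sx using P unfolding preproj_module_def by blast
  interpret vy: vector_space sy using P unfolding preproj_module_def by blast
  interpret vxy: vector_space_pair sx sy by unfold_locales
  have lin_f: "\<forall>e<r. Vector_Spaces.linear sx sy (f e)"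
    using P unfolding preproj_module_def by blast
  let ?K = "{v. \<forall>e<r. f e v \<in> snd U}"
  have K: "vx.subspace ?K"
    using subspace_joint_preimage[OF vx.vector_space_axioms vy.vector_space_axioms lin_f
        vx.subspace_UNIV, of "snd U"] U
    unfolding is_submod_def by simp
  have fK: "f e x \<in> snd U" if e: "e < r" and x: "x \<in> set_plus (fst U) ?K" for e x
  proof -
    obtain p k where p: "p \<in> fst U" and k: "k \<in> ?K" and "x = p + k"
      using x unfolding set_plus_def by blast
    then have "f e x = f e p + f e k" using vxy.linear_add[OF lin_f[rule_format, OF e]] by simp
    moreover have "f e p \<in> snd U" using U e p unfolding is_submod_def by blast
    moreover have "vy.subspace (snd U)" using U unfolding is_submod_def by blast
    ultimately show ?thesis using k e vy.subspace_add by simp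
  qed
  have "\<forall>e<r. f e 0 = 0" using lin_f vxy.linear_0 by blast
  then have "fst U \<subseteq> set_plus (fst U) ?K"
    using zero_mem_submod(2)[OF P U] by (simp add: subset_set_plus_left)
  moreover have "vx.subspace (set_plus (fst U) ?K)"
    using vx.subspace_sums[OF _ K, of "fst U"] U unfolding is_submod_def set_plus_def by blast
  ultimately show ?thesis
    using U fK unfolding is_submod_def socle_ext_def fst_conv snd_conv by blast
qed

lemma submod_le_socle_ext:
  assumes P: "preproj_module sx sy r om f g" and U: "is_submod sx sy r f g U"
  shows "submod_le U (socle_ext r f U)"
proof -
  have "\<forall>e<r. f e 0 = 0"
    using P vector_space_pair.linear_0 unfolding preproj_module_def vector_space_pair_def by blast
  then have "0 \<in> {v. \<forall>e<r. f e v \<in> snd U}" using zero_mem_submod(2)[OF P U] by simp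
  then show ?thesis unfolding submod_le_def socle_ext_def by (simp add: subset_set_plus_left)
qed

lemma socle_ext_absorbs:
  "0 \<in> fst U \<Longrightarrow> {v. \<forall>e<r. f e v \<in> snd (socle_ext r f U)} \<subseteq> fst (socle_ext r f U)"
  unfolding socle_ext_def by (simp add: subset_set_plus_right)

lemma socfilt_submod:
  assumes P: "preproj_module sa sb r om A B"
  shows "is_submod sa sb r A B (socfilt r A B n)"
proof (induction n)
  case 0
  interpret va: vector_space sa using P unfolding preproj_module_def by blast
  interpret vb: vector_space sb using P unfolding preproj_module_def by blast
  interpret vab: vector_space_pair sa sb by unfold_locales
  interpret vba: vector_space_pair sb sa by unfold_locales
  have "\<forall>e<r. A e 0 = 0 \<and> B e 0 = 0"
    using P vab.linear_0 vba.linear_0 unfolding preproj_module_def by blast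
  then show ?case unfolding is_submod_def by simp
next
  case (Suc n)
  show ?case
  proof (cases "even (Suc n)")
    case True
    show ?thesis unfolding socfilt_Suc_even[OF True] by (rule is_submod_socle_ext[OF P Suc.IH])
  next
    case False
    show ?thesis
      using is_submod_socle_ext[OF preproj_module_swap[OF P], of "prod.swap (socfilt r A B n)"] Suc.IH
      unfolding socfilt_Suc_odd[OF False] by (simp add: is_submod_swap)
  qed
qed

lemma socfilt_mono:
  assumes P: "preproj_module sa sb r om A B" and "m \<le> n"
  shows "submod_le (socfilt r A B m) (socfilt r A B n)"
  using \<open>m \<le> n\<close>
proof (induction n rule: dec_induct)
  case base
  show ?case by (simp add: submod_le_def)
next
  case (step n)
  have "submod_le (socfilt r A B n) (socfilt r A B (Suc n))"
  proof (cases "even (Suc n)")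
    case True
    show ?thesis unfolding socfilt_Suc_even[OF True] by (rule submod_le_socle_ext[OF P socfilt_submod[OF P]])
  next
    case False
    show ?thesis
      using submod_le_socle_ext[OF preproj_module_swap[OF P], of "prod.swap (socfilt r A B n)"]
        socfilt_submod[OF P]
      unfolding socfilt_Suc_odd[OF False] by (simp add: is_submod_swap submod_le_def)
  qed
  with step.IH show ?case unfolding submod_le_def by blast
qed

lemma socfilt_odd_absorbs:
  assumes P: "preproj_module sa sb r om A B" and "odd n"
  shows "{w. \<forall>e<r. B e w \<in> fst (socfilt r A B n)} \<subseteq> snd (socfilt r A B n)"
proof -
  obtain p where n: "n = Suc p" using \<open>odd n\<close> by (cases n) auto
  show ?thesis
    using socle_ext_absorbs[of "prod.swap (socfilt r A B p)" r B] zero_mem_submod(2)[OF P socfilt_submod[OF P]]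
      \<open>odd n\<close> unfolding n socfilt_Suc_odd[OF \<open>odd n\<close>[unfolded n]] by simp
qed

lemma socfilt_even_absorbs:
  assumes P: "preproj_module sa sb r om A B" and "even n" and "0 < n"
  shows "{v. \<forall>e<r. A e v \<in> snd (socfilt r A B n)} \<subseteq> fst (socfilt r A B n)"
proof -
  obtain p where n: "n = Suc p" using \<open>0 < n\<close> by (cases n) auto
  show ?thesis
    using socle_ext_absorbs[of "socfilt r A B p" r A] zero_mem_submod(1)[OF P socfilt_submod[OF P]]
      unfolding n socfilt_Suc_even[OF \<open>even n\<close>[unfolded n]] by simp
qed

section \<open>The inequalities at one vertex\<close>

locale preproj_relation =
  vx: finite_dimensional_vector_space sx Bx + vy: finite_dimensional_vector_space sy By
  for sx :: "'k::field \<Rightarrow> 'x::ab_group_add \<Rightarrow> 'x" and Bx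
    and sy :: "'k \<Rightarrow> 'y::ab_group_add \<Rightarrow> 'y" and By +
  fixes r :: nat and f :: "nat \<Rightarrow> 'x \<Rightarrow> 'y" and g :: "nat \<Rightarrow> 'y \<Rightarrow> 'x" and eps :: "nat \<Rightarrow> 'k"
  assumes linear_f: "e < r \<Longrightarrow> Vector_Spaces.linear sx sy (f e)"
    and linear_g: "e < r \<Longrightarrow> Vector_Spaces.linear sy sx (g e)"
    and relation: "(\<Sum>e<r. sx (eps e) (g e (f e v))) = 0"
    and eps_nonzero: "e < r \<Longrightarrow> eps e \<noteq> 0"
begin

sublocale vxy: vector_space_pair sx sy by unfold_locales

sublocale vyx: vector_space_pair sy sx by unfold_locales

lemma relation_mem_span:
  assumes "m < r" and "\<forall>e<m. f e v \<in> Y0" and "\<forall>e<r. f e v \<in> Y" and "\<forall>e<m. g e ` Y0 \<subseteq> Z0"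
  shows "g m (f m v) \<in> vx.span (Z0 \<union> (\<Union>e\<in>{Suc m..<r}. g e ` Y))"
proof (rule mem_subspace_of_linear_relation[OF vx.vector_space_axioms vx.subspace_span relation
      \<open>m < r\<close> eps_nonzero[OF \<open>m < r\<close>]], intro allI impI)
  fix e assume "e < r" "e \<noteq> m"
  then consider "e < m" | "e \<in> {Suc m..<r}" by fastforce
  then have "g e (f e v) \<in> Z0 \<union> (\<Union>e\<in>{Suc m..<r}. g e ` Y)"
    by cases (use assms \<open>e < r\<close> in blast)+
  then show "g e (f e v) \<in> vx.span (Z0 \<union> (\<Union>e\<in>{Suc m..<r}. g e ` Y))"
    by (rule vx.span_base)
qed

context
  fixes X Y Y0 Z0
  assumes X: "vx.subspace X" and Y: "vy.subspace Y" and Y0: "vy.subspace Y0" and Z0: "vx.subspace Z0"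
    and "Y0 \<subseteq> Y" and fX: "\<forall>e<r. f e ` X \<subseteq> Y" and gY0: "\<forall>e<r. g e ` Y0 \<subseteq> Z0"
begin

lemma relation_dim_step:
  assumes m: "m < r"
  defines "L \<equiv> \<lambda>i. {v\<in>X. \<forall>e<i. f e v \<in> Y0}" and "Z \<equiv> \<lambda>i. vx.span (Z0 \<union> (\<Union>e\<in>{i..<r}. g e ` Y))"
  shows "vx.dim (L m) + vx.dim (Z m) + vy.dim Y0 \<le> vx.dim (L (Suc m)) + vx.dim (Z (Suc m)) + vy.dim Y"
proof -
  define Yg where "Yg = {y\<in>Y. g m y \<in> Z (Suc m)}"
  \<comment> \<open>The relation enters here: for v in L m, every term of sum_e eps_e g_e f_e v but the m-th
    lies in Z (Suc m), hence so does g_m f_m v.\<close>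
  have "set_plus (f m ` L m) Y0 \<subseteq> Yg"
    unfolding set_plus_def
  proof clarify
    fix v y assume v: "v \<in> L m" and y: "y \<in> Y0"
    have "v \<in> X" and vY0: "\<forall>e<m. f e v \<in> Y0" using v unfolding L_def by auto
    then have vY: "\<forall>e<r. f e v \<in> Y" using fX by blast
    have "g m (f m v) \<in> Z (Suc m)"
      unfolding Z_def by (rule relation_mem_span[OF m vY0 vY]) (use gY0 m in simp)
    moreover have "g m y \<in> Z (Suc m)" using gY0 m y unfolding Z_def by (blast intro: vx.span_base)
    moreover have "f m v \<in> Y" "y \<in> Y" using vY m y \<open>Y0 \<subseteq> Y\<close> by blast+
    ultimately show "f m v + y \<in> Yg"
      using vyx.linear_add[OF linear_g[OF m]] vy.subspace_add[OF Y] vx.subspace_add[OF vx.subspace_span]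
      unfolding Yg_def Z_def by simp
  qed
  moreover have "vx.subspace (L m)" unfolding L_def
    by (rule subspace_joint_preimage[OF vx.vector_space_axioms vy.vector_space_axioms _ X Y0])
      (use linear_f m in simp)
  moreover have "{v\<in>L m. f m v \<in> Y0} = L (Suc m)" unfolding L_def using less_Suc_eq by auto
  ultimately have "vx.dim (L m) + vy.dim Y0 \<le> vy.dim Yg + vx.dim (L (Suc m))"
    using dim_add_le_dim_preimage[OF vx.finite_dimensional_vector_space_axioms
        vy.finite_dimensional_vector_space_axioms linear_f[OF m] _ Y0] by metis
  moreover have "Z m = set_plus (g m ` Y) (Z (Suc m))"
  proof -
    have "{m..<r} = insert m {Suc m..<r}" using m by auto
    then have "Z0 \<union> (\<Union>e\<in>{m..<r}. g e ` Y) = g m ` Y \<union> (Z0 \<union> (\<Union>e\<in>{Suc m..<r}. g e ` Y))"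
      by auto
    then show ?thesis unfolding Z_def
      using span_Un_linear_image[OF vy.vector_space_axioms vx.vector_space_axioms linear_g[OF m] Y]
      by simp
  qed
  then have "vy.dim Y + vx.dim (Z (Suc m)) = vx.dim (Z m) + vy.dim Yg"
    using dim_plus_dim_preimage[OF vy.finite_dimensional_vector_space_axioms
        vx.finite_dimensional_vector_space_axioms linear_g[OF m] Y vx.subspace_span]
    unfolding Yg_def Z_def by simp
  ultimately show ?thesis by linarith
qed

lemma relation_dim_bound:
  "vx.dim X + vx.dim (vx.span (Z0 \<union> (\<Union>e<r. g e ` Y))) + r * vy.dim Y0
     \<le> vx.dim {v\<in>X. \<forall>e<r. f e v \<in> Y0} + vx.dim Z0 + r * vy.dim Y"
proof -
  define L where "L i = {v\<in>X. \<forall>e<i. f e v \<in> Y0}" for i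
  define Z where "Z i = vx.span (Z0 \<union> (\<Union>e\<in>{i..<r}. g e ` Y))" for i
  have "vx.dim (L 0) + vx.dim (Z 0) + r * vy.dim Y0 \<le> vx.dim (L r) + vx.dim (Z r) + r * vy.dim Y"
    using telescoping_le[of r "\<lambda>m. vx.dim (L m) + vx.dim (Z m)"] relation_dim_step
    unfolding L_def Z_def by simp
  moreover have "Z 0 = vx.span (Z0 \<union> (\<Union>e<r. g e ` Y))" "Z r = Z0"
    using Z0 unfolding Z_def by (simp_all add: atLeast0LessThan)
  ultimately show ?thesis unfolding L_def by simp
qed

end

lemma is_submod_span_snd:
  assumes L: "is_submod sx sy r f g L" and W: "is_submod sx sy r f g W" and "snd L \<subseteq> snd W"
  shows "is_submod sx sy r f g (vx.span (fst L \<union> (\<Union>e<r. g e ` snd W)), snd W)"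
proof -
  have fS: "f e ` vx.span (fst L \<union> (\<Union>e<r. g e ` snd W)) \<subseteq> snd W" if e: "e < r" for e
  proof -
    have "f e ` fst L \<subseteq> snd W" using L e \<open>snd L \<subseteq> snd W\<close> unfolding is_submod_def by blast
    moreover have "f e ` g e' ` snd W \<subseteq> snd W" if "e' < r" for e'
      using W e that unfolding is_submod_def by blast
    ultimately have "f e ` (fst L \<union> (\<Union>e<r. g e ` snd W)) \<subseteq> snd W"
      by (simp add: image_Un image_UN UN_subset_iff)
    then have "vy.span (f e ` (fst L \<union> (\<Union>e<r. g e ` snd W))) \<subseteq> snd W"
      by (rule vy.span_minimal) (use W in \<open>simp add: is_submod_def\<close>)
    then show ?thesis by (simp only: vxy.linear_span_image[OF linear_f[OF e]])
  qed
  have gS: "g e ` snd W \<subseteq> vx.span (fst L \<union> (\<Union>e<r. g e ` snd W))" if "e < r" for e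
    by (rule subset_trans[OF _ vx.span_superset]) (use that in blast)
  have "vy.subspace (snd W)" using W unfolding is_submod_def by blast
  then show ?thesis unfolding is_submod_def by (simp add: fS gS)
qed

lemma span_snd_dim_upper:
  assumes L: "is_submod sx sy r f g L" and W: "is_submod sx sy r f g W"
    and LW: "submod_le (socle_ext r f L) W"
  shows "vx.dim (fst W) + vx.dim (vx.span (fst L \<union> (\<Union>e<r. g e ` snd W))) + r * vy.dim (snd L)
           \<le> vx.dim (fst (socle_ext r f L)) + vx.dim (fst L) + r * vy.dim (snd W)"
proof -
  have "snd L \<subseteq> snd W" using LW unfolding submod_le_def socle_ext_def by simp
  then have "vx.dim (fst W) + vx.dim (vx.span (fst L \<union> (\<Union>e<r. g e ` snd W))) + r * vy.dim (snd L)
      \<le> vx.dim {v\<in>fst W. \<forall>e<r. f e v \<in> snd L} + vx.dim (fst L) + r * vy.dim (snd W)"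
    using L W by (intro relation_dim_bound) (auto simp: is_submod_def)
  moreover have "{v\<in>fst W. \<forall>e<r. f e v \<in> snd L} \<subseteq> fst (socle_ext r f L)"
    using socle_ext_absorbs[of L r f] L vx.subspace_0 by (auto simp: socle_ext_def is_submod_def)
  then have "vx.dim {v\<in>fst W. \<forall>e<r. f e v \<in> snd L} \<le> vx.dim (fst (socle_ext r f L))"
    by (rule vx.dim_subset)
  ultimately show ?thesis by linarith
qed

lemma span_snd_dim_lower:
  assumes L: "is_submod sx sy r f g L" and W: "is_submod sx sy r f g W"
    and absorbs: "{w. \<forall>e<r. g e w \<in> fst L} \<subseteq> snd L"
  shows "vy.dim (snd W) + r * vx.dim (fst L)
           \<le> vy.dim (snd L) + r * vx.dim (vx.span (fst L \<union> (\<Union>e<r. g e ` snd W)))"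
proof -
  have "vy.dim (snd W) + r * vx.dim (fst L)
      \<le> vy.dim {w\<in>snd W. \<forall>e<r. g e w \<in> fst L} + r * vx.dim (vx.span (fst L \<union> (\<Union>e<r. g e ` snd W)))"
    by (rule codim_joint_preimage_le[OF vy.finite_dimensional_vector_space_axioms
          vx.finite_dimensional_vector_space_axioms _ _ _ vx.subspace_span])
      (use linear_g L W in \<open>auto simp: is_submod_def intro: vx.span_base\<close>)
  moreover have "vy.dim {w\<in>snd W. \<forall>e<r. g e w \<in> fst L} \<le> vy.dim (snd L)"
    using absorbs by (intro vy.dim_subset) blast
  ultimately show ?thesis by linarith
qed

lemma subquot_has_submod_descend:
  assumes L: "is_submod sx sy r f g L" and H: "is_submod sx sy r f g H" and "submod_le L H"
    and "subquot_has_submod sx sy r f g (socle_ext r f L) (socle_ext r f H) (dimvec 0 a b)"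
  obtains c where "subquot_has_submod sx sy r f g L H (dimvec 0 c b)" and "a + c \<le> r * b"
    and "{w. \<forall>e<r. g e w \<in> fst L} \<subseteq> snd L \<Longrightarrow> b \<le> r * c"
proof -
  obtain W where W: "is_submod sx sy r f g W" "submod_le (socle_ext r f L) W"
      "submod_le W (socle_ext r f H)"
    and dim_Wx: "vx.dim (fst W) = vx.dim (fst (socle_ext r f L)) + a"
    and dim_Wy: "vy.dim (snd W) = vy.dim (snd L) + b"
    using assms(4) unfolding subquot_has_submod_def dim_at_def dimvec_def vtx_def
    by (auto simp: socle_ext_def)
  have LW: "snd L \<subseteq> snd W" using W(2) unfolding submod_le_def socle_ext_def by simp
  define Z where "Z = vx.span (fst L \<union> (\<Union>e<r. g e ` snd W))"
  define c where "c = vx.dim Z - vx.dim (fst L)"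
  have "fst L \<subseteq> Z" unfolding Z_def by (blast intro: vx.span_base)
  then have dim_Z: "vx.dim Z = vx.dim (fst L) + c" unfolding c_def using vx.dim_subset by fastforce
  have "Z \<subseteq> fst H"
  proof -
    have "fst L \<subseteq> fst H" "snd W \<subseteq> snd H"
      using \<open>submod_le L H\<close> W(3) unfolding submod_le_def socle_ext_def by simp_all
    moreover have "g e ` snd H \<subseteq> fst H" if "e < r" for e
      using H that unfolding is_submod_def by blast
    moreover have "vx.subspace (fst H)" using H unfolding is_submod_def by blast
    ultimately show ?thesis unfolding Z_def by (intro vx.span_minimal) blast+
  qed
  then have "subquot_has_submod sx sy r f g L H (dimvec 0 c b)"
    unfolding subquot_has_submod_def dim_at_def dimvec_def vtx_def
    using is_submod_span_snd[OF L W(1) LW] W(3) LW \<open>fst L \<subseteq> Z\<close> dim_Z dim_Wy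
    by (intro exI[of _ "(Z, snd W)"]) (auto simp: Z_def submod_le_def socle_ext_def)
  moreover have "a + c \<le> r * b"
    using span_snd_dim_upper[OF L W(1,2)] dim_Wx dim_Wy dim_Z unfolding Z_def
    by (simp add: algebra_simps)
  moreover have "b \<le> r * c" if "{w. \<forall>e<r. g e w \<in> fst L} \<subseteq> snd L"
    using span_snd_dim_lower[OF L W(1) that] dim_Wy dim_Z unfolding Z_def
    by (simp add: algebra_simps)
  ultimately show ?thesis using that by blast
qed

end

lemma preproj_relation_of_module:
  assumes "preproj_module sx sy r om f g"
    and "finite_dimensional_vector_space sx Bx" and "finite_dimensional_vector_space sy By"
  shows "preproj_relation sx Bx sy By r f g (eps0 om)"
  using assms
  unfolding preproj_module_def preproj_relation_def preproj_relation_axioms_def eps0_def by auto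

section \<open>Descending the socle filtration\<close>

lemma socfilt_subquot_descend_at_0:
  assumes P: "preproj_module sa sb r om A B"
    and fda: "finite_dimensional_vector_space sa Ba" and fdb: "finite_dimensional_vector_space sb Bb"
    and LH: "submod_le (socfilt r A B n) (socfilt r A B m)" and "odd n" and "odd m"
    and sub: "subquot_has_submod sa sb r A B (socfilt r A B (Suc n)) (socfilt r A B (Suc m))
      (dimvec (Suc n) a b)"
  obtains c where "subquot_has_submod sa sb r A B (socfilt r A B n) (socfilt r A B m) (dimvec (Suc n) c b)"
    and "a + c \<le> r * b" and "0 < n \<Longrightarrow> b \<le> r * c"
proof -
  have "even (Suc n)" "even (Suc m)" using \<open>odd n\<close> \<open>odd m\<close> by simp_all
  interpret preproj_relation sa Ba sb Bb r A B "eps0 om"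
    by (rule preproj_relation_of_module[OF P fda fdb])
  obtain c where c: "subquot_has_submod sa sb r A B (socfilt r A B n) (socfilt r A B m) (dimvec 0 c b)"
    and "a + c \<le> r * b"
    and absorbs: "{w. \<forall>e<r. B e w \<in> fst (socfilt r A B n)} \<subseteq> snd (socfilt r A B n) \<Longrightarrow> b \<le> r * c"
    using subquot_has_submod_descend[OF socfilt_submod[OF P] socfilt_submod[OF P] LH] sub
    unfolding socfilt_Suc_even[OF \<open>even (Suc n)\<close>] socfilt_Suc_even[OF \<open>even (Suc m)\<close>]
      dimvec_even[OF \<open>even (Suc n)\<close>]
    by blast
  show ?thesis
  proof (rule that)
    show "subquot_has_submod sa sb r A B (socfilt r A B n) (socfilt r A B m) (dimvec (Suc n) c b)"
      using c unfolding dimvec_even[OF \<open>even (Suc n)\<close>] .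
    show "b \<le> r * c" if "0 < n" using absorbs socfilt_odd_absorbs[OF P \<open>odd n\<close>] by simp
  qed fact
qed

lemma socfilt_subquot_descend_at_1:
  assumes P: "preproj_module sa sb r om A B"
    and fda: "finite_dimensional_vector_space sa Ba" and fdb: "finite_dimensional_vector_space sb Bb"
    and LH: "submod_le (socfilt r A B n) (socfilt r A B m)" and "even n" and "even m"
    and sub: "subquot_has_submod sa sb r A B (socfilt r A B (Suc n)) (socfilt r A B (Suc m))
      (dimvec (Suc n) a b)"
  obtains c where "subquot_has_submod sa sb r A B (socfilt r A B n) (socfilt r A B m) (dimvec (Suc n) c b)"
    and "a + c \<le> r * b" and "0 < n \<Longrightarrow> b \<le> r * c"
proof -
  have "odd (Suc n)" "odd (Suc m)" using \<open>even n\<close> \<open>even m\<close> by simp_all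
  have dimvec: "dimvec (Suc (Suc n)) = dimvec 0" by (rule dimvec_even) (use \<open>even n\<close> in simp)
  interpret preproj_relation sb Bb sa Ba r B A "eps0 (\<lambda>e. \<not> om e)"
    by (rule preproj_relation_of_module[OF preproj_module_swap[OF P] fdb fda])
  have "subquot_has_submod sb sa r B A (socle_ext r B (prod.swap (socfilt r A B n)))
      (socle_ext r B (prod.swap (socfilt r A B m))) (dimvec 0 a b)"
    using subquot_has_submod_swap[THEN iffD2, OF sub]
    unfolding socfilt_Suc_odd[OF \<open>odd (Suc n)\<close>] socfilt_Suc_odd[OF \<open>odd (Suc m)\<close>] swap_swap dimvec .
  then obtain c where c: "subquot_has_submod sb sa r B A (prod.swap (socfilt r A B n))
        (prod.swap (socfilt r A B m)) (dimvec 0 c b)"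
    and "a + c \<le> r * b"
    and absorbs: "{v. \<forall>e<r. A e v \<in> fst (prod.swap (socfilt r A B n))}
        \<subseteq> snd (prod.swap (socfilt r A B n)) \<Longrightarrow> b \<le> r * c"
    by (rule subquot_has_submod_descend[OF is_submod_swap[THEN iffD2, OF socfilt_submod[OF P]]
          is_submod_swap[THEN iffD2, OF socfilt_submod[OF P]] submod_le_swap[THEN iffD2, OF LH]]) blast
  show ?thesis
  proof (rule that)
    show "subquot_has_submod sa sb r A B (socfilt r A B n) (socfilt r A B m) (dimvec (Suc n) c b)"
      using subquot_has_submod_swap[THEN iffD1, OF c[folded dimvec]] .
    show "b \<le> r * c" if "0 < n" using absorbs socfilt_even_absorbs[OF P \<open>even n\<close> that] by simp
  qed fact
qed

lemma socfilt_subquot_descend: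
  assumes P: "preproj_module sa sb r om A B" and "fin_dim sa" and "fin_dim sb"
    and "n \<le> m" and "even (m - n)"
    and sub: "subquot_has_submod sa sb r A B (socfilt r A B (Suc n)) (socfilt r A B (Suc m))
      (dimvec (Suc n) a b)"
  obtains c where "subquot_has_submod sa sb r A B (socfilt r A B n) (socfilt r A B m) (dimvec (Suc n) c b)"
    and "a + c \<le> r * b" and "0 < n \<Longrightarrow> b \<le> r * c"
proof -
  obtain Ba Bb where fda: "finite_dimensional_vector_space sa Ba"
    and fdb: "finite_dimensional_vector_space sb Bb"
    using fin_dimE assms(2,3) P unfolding preproj_module_def by metis
  have LH: "submod_le (socfilt r A B n) (socfilt r A B m)" by (rule socfilt_mono[OF P \<open>n \<le> m\<close>])
  have "even n \<longleftrightarrow> even m" using \<open>n \<le> m\<close> \<open>even (m - n)\<close> by (metis le_add_diff_inverse even_add)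
  then show ?thesis
    using socfilt_subquot_descend_at_0[OF P fda fdb LH _ _ sub] socfilt_subquot_descend_at_1[OF P fda fdb LH _ _ sub]
      that by blast
qed

theorem mainTheorem2:
  fixes sa :: "'k::field \<Rightarrow> 'a::ab_group_add \<Rightarrow> 'a"
    and sb :: "'k \<Rightarrow> 'b::ab_group_add \<Rightarrow> 'b"
    and r :: nat and om :: "nat \<Rightarrow> bool"
    and A :: "nat \<Rightarrow> 'a \<Rightarrow> 'b" and B :: "nat \<Rightarrow> 'b \<Rightarrow> 'a"
    and j k a b :: nat
  assumes "r \<ge> 3"
    and "preproj_module sa sb r om A B"
    and "fin_dim sa" and "fin_dim sb"
    and "nilpotent_mod r A B"
    and "1 \<le> j" and "j < k" and "even (k - j)"
    and "subquot_has_submod sa sb r A B (socfilt r A B j) (socfilt r A B k) (dimvec j a b)"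
  shows "\<exists>c::nat.
           subquot_has_submod sa sb r A B (socfilt r A B (j - 1)) (socfilt r A B (k - 1))
             (dimvec j c b) \<and>
           int c \<le> int r * int b - int a \<and>
           (j \<ge> 2 \<longrightarrow> real b / real r \<le> real c)"
proof -
  obtain n where j: "j = Suc n" using \<open>1 \<le> j\<close> by (cases j) auto
  obtain m where k: "k = Suc m" using \<open>j < k\<close> by (cases k) auto
  obtain c where
    c: "subquot_has_submod sa sb r A B (socfilt r A B n) (socfilt r A B m) (dimvec j c b)"
    and "a + c \<le> r * b" and "0 < n \<Longrightarrow> b \<le> r * c"
    using socfilt_subquot_descend[OF assms(2-4), of n m a b] assms(7-9) unfolding j k by auto
  have "int a + int c \<le> int r * int b"
    using \<open>a + c \<le> r * b\<close> by (metis of_nat_add of_nat_le_iff of_nat_mult)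
  moreover have "real b / real r \<le> real c" if "j \<ge> 2"
  proof -
    have "real b \<le> real c * real r"
      using \<open>0 < n \<Longrightarrow> b \<le> r * c\<close> that j by (simp add: mult.commute flip: of_nat_mult)
    then show ?thesis using \<open>r \<ge> 3\<close> by (simp add: pos_divide_le_eq)
  qed
  ultimately show ?thesis using c unfolding j k by auto
qed

end
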